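(* Let $H$ be a Kekul\'ean hexagonal system and let $C,C'$ be Clar covers of $H$. Then $f(C)\subseteq f(C')$ if and only if every hexagon component of $C$ is a hexagon component of $C'$, and $C$ and $C'$ coincide on all edges of $H$ other than those lying on hexagon components of $C'$ (i.e. such an edge lies in $C$ iff it lies in $C'$).
   Context: A hexagonal system is a 2-connected finite plane graph in which every interior face is a regular hexagon of side length one; its hexagons are the boundaries of its interior faces; it is Kekul\'ean if it has a perfect matching. A Clar cover of $H$ is a spanning subgraph each of whose components is a hexagon of $H$ or a single edge. The resonance graph $R(H)$ has the perfect matchings of $H$ as vertices, two adjacent iff their symmetric difference is the edge set of a hexagon of $H$. For a Clar cover $C$, $f(C)$ denotes the subgraph of $R(H)$ induced by all perfect matchings $M$ of $H$ such that every hexagon component of $C$ is $M$-alternating and every single-edge component of $C$ belongs to $M$. *)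

theory Defs
  imports Main
begin

text \<open>
  Hexagonal systems are encoded inside the hexagonal (honeycomb) lattice.
  Cells (hexagons) of the lattice are indexed by points of the triangular
  lattice, type int * int.  Vertices of the honeycomb are the triangles of the
  triangular lattice: (i, j, True) is the up triangle with corners
  (i,j), (i+1,j), (i,j+1); (i, j, False) is the down triangle with corners
  (i+1,j), (i,j+1), (i+1,j+1).  The hexagonal cell around the lattice point
  (a,b) consists of the six triangles having (a,b) as a corner.
\<close>

type_synonym cell = "int \<times> int"
type_synonym hvertex = "int \<times> int \<times> bool"
type_synonym hedge = "hvertex set"

definition hexV :: "cell \<Rightarrow> hvertex set" where
  "hexV c = (case c of (a, b) \<Rightarrow>
     {(a, b, True), (a - 1, b, True), (a, b - 1, True),
      (a - 1, b, False), (a, b - 1, False), (a - 1, b - 1, False)})"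

definition hexE :: "cell \<Rightarrow> hedge set" where
  "hexE c = (case c of (a, b) \<Rightarrow>
     {{(a, b, True), (a - 1, b, False)},
      {(a - 1, b, False), (a - 1, b, True)},
      {(a - 1, b, True), (a - 1, b - 1, False)},
      {(a - 1, b - 1, False), (a, b - 1, True)},
      {(a, b - 1, True), (a, b - 1, False)},
      {(a, b - 1, False), (a, b, True)}})"

definition cell_adj :: "cell \<Rightarrow> cell \<Rightarrow> bool" where
  "cell_adj c d \<longleftrightarrow> c \<noteq> d \<and> hexE c \<inter> hexE d \<noteq> {}"

text \<open>A hexagonal system, given by its set S of hexagons: a finite nonempty set of
  cells whose union is connected (2-connected plane graph) and has no holes
  (every bounded face is one of its hexagons): every cell outside S lies in an
  infinite connected region of cells outside S.\<close>
definition hexagonal_system :: "cell set \<Rightarrow> bool" where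
  "hexagonal_system S \<longleftrightarrow>
     finite S \<and> S \<noteq> {} \<and>
     (\<forall>c\<in>S. \<forall>d\<in>S. (\<lambda>x y. x \<in> S \<and> y \<in> S \<and> cell_adj x y)\<^sup>*\<^sup>* c d) \<and>
     (\<forall>c. c \<notin> S \<longrightarrow>
        infinite {d. (\<lambda>x y. x \<notin> S \<and> y \<notin> S \<and> cell_adj x y)\<^sup>*\<^sup>* c d})"

definition hs_verts :: "cell set \<Rightarrow> hvertex set" where
  "hs_verts S = (\<Union>c\<in>S. hexV c)"

definition hs_edges :: "cell set \<Rightarrow> hedge set" where
  "hs_edges S = (\<Union>c\<in>S. hexE c)"

definition perfect_matching :: "cell set \<Rightarrow> hedge set \<Rightarrow> bool" where
  "perfect_matching S M \<longleftrightarrow> M \<subseteq> hs_edges S \<and>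
     (\<forall>v\<in>hs_verts S. \<exists>!e. e \<in> M \<and> v \<in> e)"

definition kekulean :: "cell set \<Rightarrow> bool" where
  "kekulean S \<longleftrightarrow> (\<exists>M. perfect_matching S M)"

definition comp_verts :: "hedge set \<Rightarrow> hvertex \<Rightarrow> hvertex set" where
  "comp_verts C v = {u. (\<lambda>x y. {x, y} \<in> C)\<^sup>*\<^sup>* v u}"

definition comp_edges :: "hedge set \<Rightarrow> hvertex \<Rightarrow> hedge set" where
  "comp_edges C v = {e \<in> C. e \<subseteq> comp_verts C v}"

text \<open>A Clar cover: a spanning subgraph (vertex set = all vertices of H, edge set C)
  each of whose components is a hexagon of H or a single edge.\<close>
definition clar_cover :: "cell set \<Rightarrow> hedge set \<Rightarrow> bool" where
  "clar_cover S C \<longleftrightarrow> C \<subseteq> hs_edges S \<and>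
     (\<forall>v\<in>hs_verts S.
        (\<exists>c\<in>S. comp_edges C v = hexE c) \<or> (\<exists>e. comp_edges C v = {e}))"

definition hex_components :: "cell set \<Rightarrow> hedge set \<Rightarrow> cell set" where
  "hex_components S C = {c \<in> S. \<exists>v\<in>hs_verts S. comp_edges C v = hexE c}"

definition edge_components :: "cell set \<Rightarrow> hedge set \<Rightarrow> hedge set" where
  "edge_components S C = {e. \<exists>v\<in>hs_verts S. comp_edges C v = {e}}"

definition alternating :: "hedge set \<Rightarrow> cell \<Rightarrow> bool" where
  "alternating M c \<longleftrightarrow>
     (\<forall>e1\<in>hexE c. \<forall>e2\<in>hexE c. e1 \<noteq> e2 \<and> e1 \<inter> e2 \<noteq> {} \<longrightarrow> (e1 \<in> M \<longleftrightarrow> e2 \<notin> M))"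

definition res_adj :: "cell set \<Rightarrow> hedge set \<Rightarrow> hedge set \<Rightarrow> bool" where
  "res_adj S M1 M2 \<longleftrightarrow> perfect_matching S M1 \<and> perfect_matching S M2 \<and>
     (\<exists>c\<in>S. (M1 - M2) \<union> (M2 - M1) = hexE c)"

definition resonance_graph :: "cell set \<Rightarrow> hedge set set \<times> hedge set set set" where
  "resonance_graph S = ({M. perfect_matching S M}, {{M1, M2} | M1 M2. res_adj S M1 M2})"

definition induced_subgraph ::
  "'a set \<times> 'a set set \<Rightarrow> 'a set \<Rightarrow> 'a set \<times> 'a set set" where
  "induced_subgraph G W = (fst G \<inter> W, {e \<in> snd G. e \<subseteq> W})"

definition subgraph :: "'a set \<times> 'a set set \<Rightarrow> 'a set \<times> 'a set set \<Rightarrow> bool" where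
  "subgraph G G' \<longleftrightarrow> fst G \<subseteq> fst G' \<and> snd G \<subseteq> snd G'"

definition fC :: "cell set \<Rightarrow> hedge set \<Rightarrow> hedge set set \<times> hedge set set set" where
  "fC S C = induced_subgraph (resonance_graph S)
     {M. perfect_matching S M \<and> (\<forall>c\<in>hex_components S C. alternating M c) \<and>
         (\<forall>e\<in>edge_components S C. e \<in> M)}"

end

theory Submission
  imports Defs
begin

text \<open>
  The subgraph f(C) is induced, so f(C) \<subseteq> f(C') means that every perfect matching
  compatible with C is compatible with C'.  If the conditions hold, this is the case: the
  single edges of C' are single edges of C, and a hexagon of C' that is not a hexagon of C
  is covered by single edges of C, hence alternating.
  Conversely, choosing a Kekul\'e structure on every hexagon of C and adding the single
  edges of C gives perfect matchings compatible with C.  Two of them that differ only on a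
  hexagon c of C meet a vertex of c in two adjacent edges of c, which forces c to be a
  hexagon of C'; and an edge outside the hexagons of C' lying in such a matching must be a
  single edge of C'.
\<close>

lemma hexV_eq_Union_hexE: "hexV c = \<Union>(hexE c)"
  by (cases c) (auto simp: hexE_def hexV_def)

lemma card_hexE_edge: "e \<in> hexE c \<Longrightarrow> card e = 2"
  by (cases c) (auto simp: hexE_def)

lemma ex_mem_hexE_edge: "e \<in> hexE c \<Longrightarrow> \<exists>x. x \<in> e"
  using card_hexE_edge[of e c] by (auto simp: card_2_iff)

lemma hexE_nonempty: "hexE c \<noteq> {}"
  by (cases c) (simp add: hexE_def)

lemma hexE_neq_singleton: "hexE c \<noteq> {e}"
  by (cases c) (auto simp: hexE_def doubleton_eq_iff)

lemma hexE_at_vertex: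
  assumes "x \<in> hexV c"
  shows "\<exists>e1 e2. e1 \<noteq> e2 \<and> {f \<in> hexE c. x \<in> f} = {e1, e2}"
proof -
  obtain a b where c: "c = (a, b)" by fastforce
  let ?u0 = "(a, b, True)" and ?u1 = "(a - 1, b, False)" and ?u2 = "(a - 1, b, True)"
    and ?u3 = "(a - 1, b - 1, False)" and ?u4 = "(a, b - 1, True)" and ?u5 = "(a, b - 1, False)"
  have "x \<in> {?u0, ?u1, ?u2, ?u3, ?u4, ?u5}"
    using assms by (auto simp: c hexV_def)
  then consider "x = ?u0" | "x = ?u1" | "x = ?u2" | "x = ?u3" | "x = ?u4" | "x = ?u5"
    by blast
  then show ?thesis
  proof cases
    case 1
    show ?thesis by (rule exI[of _ "{?u5, ?u0}"], rule exI[of _ "{?u0, ?u1}"])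
        (auto simp: 1 c hexE_def doubleton_eq_iff)
  next
    case 2
    show ?thesis by (rule exI[of _ "{?u0, ?u1}"], rule exI[of _ "{?u1, ?u2}"])
        (auto simp: 2 c hexE_def doubleton_eq_iff)
  next
    case 3
    show ?thesis by (rule exI[of _ "{?u1, ?u2}"], rule exI[of _ "{?u2, ?u3}"])
        (auto simp: 3 c hexE_def doubleton_eq_iff)
  next
    case 4
    show ?thesis by (rule exI[of _ "{?u2, ?u3}"], rule exI[of _ "{?u3, ?u4}"])
        (auto simp: 4 c hexE_def doubleton_eq_iff)
  next
    case 5
    show ?thesis by (rule exI[of _ "{?u3, ?u4}"], rule exI[of _ "{?u4, ?u5}"])
        (auto simp: 5 c hexE_def doubleton_eq_iff)
  next
    case 6
    show ?thesis by (rule exI[of _ "{?u4, ?u5}"], rule exI[of _ "{?u5, ?u0}"])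
        (auto simp: 6 c hexE_def doubleton_eq_iff)
  qed
qed

text \<open>The two Kekul\'e structures of a hexagon: every other edge of its boundary cycle.\<close>

definition hexE_even :: "cell \<Rightarrow> hedge set" where
  "hexE_even c = (case c of (a, b) \<Rightarrow>
     {{(a, b, True), (a - 1, b, False)},
      {(a - 1, b, True), (a - 1, b - 1, False)},
      {(a, b - 1, True), (a, b - 1, False)}})"

definition hexE_odd :: "cell \<Rightarrow> hedge set" where
  "hexE_odd c = (case c of (a, b) \<Rightarrow>
     {{(a - 1, b, False), (a - 1, b, True)},
      {(a - 1, b - 1, False), (a, b - 1, True)},
      {(a, b - 1, False), (a, b, True)}})"

lemma hexE_even_Un_odd: "hexE_even c \<union> hexE_odd c = hexE c"
  by (cases c) (auto simp: hexE_even_def hexE_odd_def hexE_def)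

lemma hexE_even_Int_odd: "hexE_even c \<inter> hexE_odd c = {}"
  by (cases c) (auto simp: hexE_even_def hexE_odd_def doubleton_eq_iff)

lemma alternating_hexE_even: "alternating (hexE_even c) c"
  by (cases c) (auto simp: alternating_def hexE_def hexE_even_def doubleton_eq_iff)

lemma alternating_hexE_odd: "alternating (hexE_odd c) c"
  by (cases c) (auto simp: alternating_def hexE_def hexE_odd_def doubleton_eq_iff)

lemma common_vertex_of_distinct_cells:
  assumes "x \<in> hexV c" "x \<in> hexV d" "c \<noteq> d"
  shows "x = (min (fst c) (fst d), min (snd c) (snd d), True) \<or>
         x = (max (fst c) (fst d) - 1, max (snd c) (snd d) - 1, False)"
proof -
  obtain a b a' b' where cd: "c = (a, b)" "d = (a', b')" by fastforce
  obtain i j t where x: "x = (i, j, t)" by (cases x) auto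
  show ?thesis
    using assms unfolding cd x hexV_def by (cases t) (auto simp: min_def max_def)
qed

lemma cell_eq_if_three_common_vertices:
  assumes "{x, y, z} \<subseteq> hexV c \<inter> hexV d" "x \<noteq> y" "y \<noteq> z" "x \<noteq> z"
  shows "c = d"
  using assms common_vertex_of_distinct_cells[of _ c d] unfolding insert_subset Int_iff by metis

lemma cell_eq_if_common_adjacent_edges:
  assumes "{e1, e2} \<subseteq> hexE c \<inter> hexE d" "e1 \<noteq> e2" "x \<in> e1" "x \<in> e2"
  shows "c = d"
proof -
  obtain y where y: "e1 = {x, y}" "x \<noteq> y"
    using card_hexE_edge[of e1 c] assms(1,3) by (auto simp: card_2_iff doubleton_eq_iff)
  obtain z where z: "e2 = {x, z}" "x \<noteq> z"
    using card_hexE_edge[of e2 c] assms(1,4) by (auto simp: card_2_iff doubleton_eq_iff)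
  have "{x, y, z} \<subseteq> hexV c \<inter> hexV d"
    using assms(1) y z by (auto simp: hexV_eq_Union_hexE)
  moreover have "y \<noteq> z" using assms(2) y z by blast
  ultimately show ?thesis
    using cell_eq_if_three_common_vertices y(2) z(2) by blast
qed

lemma inj_hexE: "inj hexE"
proof (rule injI)
  fix c d assume cd: "hexE c = hexE d"
  have "(fst c, snd c, True) \<in> hexV c" by (cases c) (simp add: hexV_def)
  then obtain e1 e2 where e: "e1 \<noteq> e2" "{f \<in> hexE c. (fst c, snd c, True) \<in> f} = {e1, e2}"
    using hexE_at_vertex[OF \<open>_ \<in> hexV c\<close>] by blast
  then have "e1 \<in> {f \<in> hexE c. (fst c, snd c, True) \<in> f}" "e2 \<in> {f \<in> hexE c. (fst c, snd c, True) \<in> f}"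
    by simp_all
  then show "c = d"
    using cell_eq_if_common_adjacent_edges[of e1 e2 c d] e(1) cd by blast
qed

lemma alternating_cong: "M \<inter> hexE c = N \<inter> hexE c \<Longrightarrow> alternating M c = alternating N c"
  unfolding alternating_def by blast

lemma alternatingD:
  "alternating M c \<Longrightarrow> e1 \<in> hexE c \<Longrightarrow> e2 \<in> hexE c \<Longrightarrow> e1 \<noteq> e2 \<Longrightarrow> x \<in> e1 \<Longrightarrow> x \<in> e2
    \<Longrightarrow> e1 \<in> M \<longleftrightarrow> e2 \<notin> M"
  unfolding alternating_def by blast

lemma alternating_ex1_edge_at:
  assumes alt: "alternating M c" and x: "x \<in> hexV c"
  shows "\<exists>!f. f \<in> hexE c \<inter> M \<and> x \<in> f"
proof -
  obtain e1 e2 where "e1 \<noteq> e2" and at_x: "{f \<in> hexE c. x \<in> f} = {e1, e2}"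
    using hexE_at_vertex[OF x] by blast
  moreover have "e1 \<in> hexE c" "e2 \<in> hexE c" "x \<in> e1" "x \<in> e2"
    using at_x by (simp_all add: set_eq_iff) blast+
  ultimately have "e1 \<in> M \<longleftrightarrow> e2 \<notin> M"
    using alternatingD[OF alt] by blast
  moreover have "f = e1 \<or> f = e2" if "f \<in> hexE c" "x \<in> f" for f
    using that at_x by blast
  ultimately show ?thesis
    using \<open>x \<in> e1\<close> \<open>x \<in> e2\<close> \<open>e1 \<in> hexE c\<close> \<open>e2 \<in> hexE c\<close> by blast
qed


lemma perfect_matching_edge_at_unique:
  "perfect_matching S M \<Longrightarrow> v \<in> hs_verts S \<Longrightarrow> e \<in> M \<Longrightarrow> f \<in> M \<Longrightarrow> v \<in> e \<Longrightarrow> v \<in> f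
    \<Longrightarrow> e = f"
  unfolding perfect_matching_def by blast

lemma alternating_if_perfect_matching_covers:
  assumes M: "perfect_matching S M" and c: "c \<in> S"
    and covers: "\<And>x. x \<in> hexV c \<Longrightarrow> \<exists>f\<in>hexE c \<inter> M. x \<in> f"
  shows "alternating M c"
  unfolding alternating_def
proof (intro ballI impI)
  fix e1 e2 assume e12: "e1 \<in> hexE c" "e2 \<in> hexE c" "e1 \<noteq> e2 \<and> e1 \<inter> e2 \<noteq> {}"
  then obtain x where x: "x \<in> e1" "x \<in> e2" by blast
  have xc: "x \<in> hexV c" using e12(1) x(1) by (auto simp: hexV_eq_Union_hexE)
  then have xS: "x \<in> hs_verts S" using c by (auto simp: hs_verts_def)
  obtain g1 g2 where at_x: "{f \<in> hexE c. x \<in> f} = {g1, g2}"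
    using hexE_at_vertex[OF xc] by blast
  obtain f where f: "f \<in> hexE c" "f \<in> M" "x \<in> f" using covers[OF xc] by blast
  have "f = e1 \<or> f = e2"
  proof -
    have "{f, e1, e2} \<subseteq> {g1, g2}" using at_x f x e12(1,2) by blast
    then show ?thesis using e12(3) by blast
  qed
  moreover have "\<not> (e1 \<in> M \<and> e2 \<in> M)"
    using perfect_matching_edge_at_unique[OF M xS, of e1 e2] x e12(3) by blast
  ultimately show "e1 \<in> M \<longleftrightarrow> e2 \<notin> M" using f(2) by blast
qed

lemma hs_edges_card: "e \<in> hs_edges S \<Longrightarrow> card e = 2"
  unfolding hs_edges_def using card_hexE_edge by blast

lemma ex_mem_hs_edge: "e \<in> hs_edges S \<Longrightarrow> \<exists>x. x \<in> e"
  unfolding hs_edges_def using ex_mem_hexE_edge by blast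

lemma hs_verts_if_in_hs_edge: "e \<in> hs_edges S \<Longrightarrow> x \<in> e \<Longrightarrow> x \<in> hs_verts S"
  unfolding hs_edges_def hs_verts_def by (auto simp: hexV_eq_Union_hexE)

lemma hs_verts_if_in_hexV: "c \<in> S \<Longrightarrow> x \<in> hexV c \<Longrightarrow> x \<in> hs_verts S"
  unfolding hs_verts_def by blast

lemma edge_in_comp_edges:
  assumes "card e = 2" "e \<in> C" "v \<in> e"
  shows "e \<in> comp_edges C v"
proof -
  have "u = v \<or> {v, u} = e" if "u \<in> e" for u
    using assms(1,3) that by (auto simp: card_2_iff doubleton_eq_iff)
  then have "e \<subseteq> comp_verts C v"
    using assms(2) unfolding comp_verts_def by auto
  then show ?thesis using assms(2) unfolding comp_edges_def by blast
qed

lemma comp_edges_eq_if_mem: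
  assumes "e \<in> comp_edges C v" "w \<in> e"
  shows "comp_edges C w = comp_edges C v"
proof -
  let ?adj = "\<lambda>x y. {x, y} \<in> C"
  have "symp ?adj" by (rule sympI) (simp add: insert_commute)
  moreover have vw: "?adj\<^sup>*\<^sup>* v w"
    using assms unfolding comp_edges_def comp_verts_def by blast
  ultimately have "?adj\<^sup>*\<^sup>* w v" by (blast dest: sympD[OF symp_rtranclp])
  then have "comp_verts C w = comp_verts C v"
    using vw unfolding comp_verts_def by (auto intro: rtranclp_trans)
  then show ?thesis unfolding comp_edges_def by simp
qed

lemma comp_edges_subset: "comp_edges C v \<subseteq> C"
  unfolding comp_edges_def by blast

lemma ex_edge_at_if_comp_edges_nonempty:
  assumes edges: "\<forall>e\<in>C. card e = 2" and ne: "comp_edges C v \<noteq> {}"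
  shows "\<exists>e\<in>C. v \<in> e"
proof (rule ccontr)
  assume isolated: "\<not> (\<exists>e\<in>C. v \<in> e)"
  have "comp_verts C v \<subseteq> {v}"
  proof
    fix u assume "u \<in> comp_verts C v"
    then have "(\<lambda>x y. {x, y} \<in> C)\<^sup>*\<^sup>* v u" unfolding comp_verts_def by simp
    then show "u \<in> {v}" by (cases rule: converse_rtranclpE) (use isolated in auto)
  qed
  moreover obtain e where "e \<in> comp_edges C v" using ne by blast
  ultimately have "e \<in> C" "e \<subseteq> {v}" unfolding comp_edges_def by auto
  then show False using edges card_mono[of "{v}" e] by fastforce
qed

lemma hex_component_at:
  assumes d: "d \<in> hex_components S C" and x: "x \<in> hexV d"
  shows "comp_edges C x = hexE d"
proof -
  obtain v where v: "comp_edges C v = hexE d"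
    using d unfolding hex_components_def by blast
  obtain f where "f \<in> hexE d" "x \<in> f"
    using x by (auto simp: hexV_eq_Union_hexE)
  then show ?thesis using comp_edges_eq_if_mem[of f C v x] v by simp
qed

lemma edge_component_at:
  assumes e: "e \<in> edge_components S C" and x: "x \<in> e"
  shows "comp_edges C x = {e}"
proof -
  obtain v where v: "comp_edges C v = {e}"
    using e unfolding edge_components_def by blast
  then show ?thesis using comp_edges_eq_if_mem[of e C v x] x by simp
qed

lemma hexE_subset_if_hex_component: "d \<in> hex_components S C \<Longrightarrow> hexE d \<subseteq> C"
  unfolding hex_components_def using comp_edges_subset by blast

lemma mem_if_edge_component: "e \<in> edge_components S C \<Longrightarrow> e \<in> C"
  unfolding edge_components_def using comp_edges_subset by blast

lemma edge_component_notin_hex_component: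
  assumes e: "e \<in> edge_components S C" and d: "d \<in> hex_components S C"
  shows "e \<notin> hexE d"
proof
  assume ed: "e \<in> hexE d"
  then obtain x where x: "x \<in> e" using ex_mem_hexE_edge by blast
  then have "x \<in> hexV d" using ed by (auto simp: hexV_eq_Union_hexE)
  then have "hexE d = {e}"
    using hex_component_at[OF d] edge_component_at[OF e x] by simp
  then show False using hexE_neq_singleton by blast
qed

lemma hex_component_eq_if_common_edge:
  assumes "d \<in> hex_components S C" "d' \<in> hex_components S C" "f \<in> hexE d" "f \<in> hexE d'"
  shows "d = d'"
proof -
  obtain x where "x \<in> f" using assms(3) ex_mem_hexE_edge by blast
  then have "x \<in> hexV d" "x \<in> hexV d'" using assms(3,4) by (auto simp: hexV_eq_Union_hexE)
  then have "hexE d = hexE d'" using hex_component_at assms(1,2) by metis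
  then show ?thesis using inj_hexE by (simp add: inj_eq)
qed

context
  fixes S :: "cell set" and C :: "hedge set"
  assumes clar: "clar_cover S C"
begin

lemma clar_cover_subset: "C \<subseteq> hs_edges S"
  using clar unfolding clar_cover_def by blast

lemma clar_cover_vertex_cases:
  assumes v: "v \<in> hs_verts S"
  shows "(\<exists>d\<in>hex_components S C. v \<in> hexV d) \<or> (\<exists>e\<in>edge_components S C. v \<in> e)"
proof -
  have comp: "(\<exists>d\<in>S. comp_edges C v = hexE d) \<or> (\<exists>e. comp_edges C v = {e})"
    using clar v unfolding clar_cover_def by blast
  have edges: "\<forall>e\<in>C. card e = 2" using clar_cover_subset hs_edges_card by blast
  have "comp_edges C v \<noteq> {}" using comp hexE_nonempty by blast
  then obtain e where e: "e \<in> C" "v \<in> e"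
    using ex_edge_at_if_comp_edges_nonempty[OF edges] by blast
  then have e_comp: "e \<in> comp_edges C v" using edges edge_in_comp_edges by blast
  from comp show ?thesis
  proof
    assume "\<exists>d\<in>S. comp_edges C v = hexE d"
    then obtain d where "d \<in> S" "comp_edges C v = hexE d" by blast
    moreover from this have "v \<in> hexV d"
      using e_comp e(2) by (auto simp: hexV_eq_Union_hexE)
    ultimately show ?thesis using v unfolding hex_components_def by blast
  next
    assume "\<exists>e'. comp_edges C v = {e'}"
    then have "comp_edges C v = {e}" using e_comp by blast
    then show ?thesis using v e(2) unfolding edge_components_def by blast
  qed
qed

lemma clar_cover_edge_cases:
  assumes e: "e \<in> C"
  shows "e \<in> edge_components S C \<or> (\<exists>d\<in>hex_components S C. e \<in> hexE d)"
proof -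
  have eS: "e \<in> hs_edges S" using e clar_cover_subset by blast
  then obtain x where x: "x \<in> e" using ex_mem_hs_edge by blast
  have e_comp: "e \<in> comp_edges C x" using edge_in_comp_edges[OF hs_edges_card[OF eS] e x] .
  from clar_cover_vertex_cases[OF hs_verts_if_in_hs_edge[OF eS x]] show ?thesis
  proof
    assume "\<exists>d\<in>hex_components S C. x \<in> hexV d"
    then obtain d where "d \<in> hex_components S C" "x \<in> hexV d" by blast
    with e_comp show ?thesis by (auto simp: hex_component_at)
  next
    assume "\<exists>f\<in>edge_components S C. x \<in> f"
    then obtain f where "f \<in> edge_components S C" "x \<in> f" by blast
    with e_comp show ?thesis by (auto simp: edge_component_at)
  qed
qed

end

definition compatible_matchings :: "cell set \<Rightarrow> hedge set \<Rightarrow> hedge set set" where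
  "compatible_matchings S C = {M. perfect_matching S M \<and>
     (\<forall>c\<in>hex_components S C. alternating M c) \<and> (\<forall>e\<in>edge_components S C. e \<in> M)}"

lemma subgraph_fC_iff:
  "subgraph (fC S C) (fC S C') \<longleftrightarrow> compatible_matchings S C \<subseteq> compatible_matchings S C'"
proof -
  have verts: "fst (fC S X) = compatible_matchings S X" for X
    unfolding fC_def induced_subgraph_def resonance_graph_def compatible_matchings_def by auto
  have edges: "snd (fC S X) = {e \<in> snd (resonance_graph S). e \<subseteq> compatible_matchings S X}" for X
    unfolding fC_def induced_subgraph_def compatible_matchings_def by simp
  show ?thesis unfolding subgraph_def verts edges by blast
qed

definition hex_kekule :: "cell set \<Rightarrow> cell \<Rightarrow> hedge set" where
  "hex_kekule \<sigma> d = (if d \<in> \<sigma> then hexE_even d else hexE_odd d)"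

lemma hex_kekule_subset: "hex_kekule \<sigma> d \<subseteq> hexE d"
  using hexE_even_Un_odd[of d] by (auto simp: hex_kekule_def)

lemma alternating_hex_kekule: "alternating (hex_kekule \<sigma> d) d"
  by (simp add: hex_kekule_def alternating_hexE_even alternating_hexE_odd)

definition clar_matching :: "cell set \<Rightarrow> hedge set \<Rightarrow> cell set \<Rightarrow> hedge set" where
  "clar_matching S C \<sigma> = edge_components S C \<union> (\<Union>d\<in>hex_components S C. hex_kekule \<sigma> d)"

lemma clar_matching_subset: "clar_matching S C \<sigma> \<subseteq> C"
  unfolding clar_matching_def
  using mem_if_edge_component hexE_subset_if_hex_component hex_kekule_subset by blast

lemma clar_matching_Int_hexE:
  assumes d: "d \<in> hex_components S C"
  shows "clar_matching S C \<sigma> \<inter> hexE d = hex_kekule \<sigma> d"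
proof (intro equalityI subsetI)
  fix f assume f: "f \<in> clar_matching S C \<sigma> \<inter> hexE d"
  then have "f \<notin> edge_components S C"
    using edge_component_notin_hex_component[OF _ d] by blast
  then obtain d' where d': "d' \<in> hex_components S C" "f \<in> hex_kekule \<sigma> d'"
    using f unfolding clar_matching_def by blast
  then have "d' = d"
    using hex_component_eq_if_common_edge[OF d'(1) d] hex_kekule_subset f by blast
  then show "f \<in> hex_kekule \<sigma> d" using d' by simp
next
  fix f assume "f \<in> hex_kekule \<sigma> d"
  then show "f \<in> clar_matching S C \<sigma> \<inter> hexE d"
    using d hex_kekule_subset unfolding clar_matching_def by blast
qed

lemma alternating_clar_matching:
  "d \<in> hex_components S C \<Longrightarrow> alternating (clar_matching S C \<sigma>) d"
  using alternating_cong[of "clar_matching S C \<sigma>" d "hex_kekule \<sigma> d"]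
    clar_matching_Int_hexE hex_kekule_subset alternating_hex_kekule
  by (metis Int_absorb2)

lemma clar_matching_compatible:
  assumes clar: "clar_cover S C"
  shows "clar_matching S C \<sigma> \<in> compatible_matchings S C"
proof -
  let ?M = "clar_matching S C \<sigma>"
  have sub: "C \<subseteq> hs_edges S" using clar_cover_subset[OF clar] .
  have at_v: "f \<in> comp_edges C v" if "f \<in> ?M" "v \<in> f" for f v
  proof -
    have f: "f \<in> C" using that(1) clar_matching_subset by blast
    then have "f \<in> hs_edges S" using sub by blast
    then show ?thesis by (rule edge_in_comp_edges[OF hs_edges_card f that(2)])
  qed
  have "\<exists>!e. e \<in> ?M \<and> v \<in> e" if v: "v \<in> hs_verts S" for v
    using clar_cover_vertex_cases[OF clar v]
  proof
    assume "\<exists>d\<in>hex_components S C. v \<in> hexV d"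
    then obtain d where d: "d \<in> hex_components S C" "v \<in> hexV d" by blast
    obtain f where f: "f \<in> hexE d \<inter> ?M" "v \<in> f"
      and unique: "\<And>g. g \<in> hexE d \<inter> ?M \<and> v \<in> g \<Longrightarrow> g = f"
      using alternating_ex1_edge_at[OF alternating_clar_matching[OF d(1)] d(2)] by blast
    show ?thesis
    proof (rule ex1I[of _ f])
      fix g assume g: "g \<in> ?M \<and> v \<in> g"
      then have "g \<in> comp_edges C v" using at_v by blast
      then have "g \<in> hexE d" using hex_component_at[OF d] by simp
      with g show "g = f" using unique by blast
    qed (use f in blast)
  next
    assume "\<exists>e\<in>edge_components S C. v \<in> e"
    then obtain e where e: "e \<in> edge_components S C" "v \<in> e" by blast
    show ?thesis
    proof (rule ex1I[of _ e])
      show "e \<in> ?M \<and> v \<in> e" using e unfolding clar_matching_def by blast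
    next
      fix g assume g: "g \<in> ?M \<and> v \<in> g"
      then have "g \<in> comp_edges C v" using at_v by blast
      then show "g = e" using edge_component_at[OF e] by simp
    qed
  qed
  then have "perfect_matching S ?M"
    unfolding perfect_matching_def using clar_matching_subset sub by blast
  moreover have "edge_components S C \<subseteq> ?M" unfolding clar_matching_def by blast
  ultimately show ?thesis
    unfolding compatible_matchings_def by (auto simp: alternating_clar_matching)
qed

lemma compatible_edge_outside_hexagons:
  assumes clar: "clar_cover S C" and M: "M \<in> compatible_matchings S C" and e: "e \<in> M"
    and outside: "\<forall>d\<in>hex_components S C. e \<notin> hexE d"
  shows "e \<in> edge_components S C"
proof -
  have pm: "perfect_matching S M" using M unfolding compatible_matchings_def by blast
  then have eS: "e \<in> hs_edges S" using e unfolding perfect_matching_def by blast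
  then obtain x where x: "x \<in> e" using ex_mem_hs_edge by blast
  have xS: "x \<in> hs_verts S" using hs_verts_if_in_hs_edge[OF eS x] .
  from clar_cover_vertex_cases[OF clar xS] show ?thesis
  proof
    assume "\<exists>d\<in>hex_components S C. x \<in> hexV d"
    then obtain d where d: "d \<in> hex_components S C" "x \<in> hexV d" by blast
    then have "alternating M d" using M unfolding compatible_matchings_def by blast
    then obtain f where "f \<in> hexE d" "f \<in> M" "x \<in> f"
      using alternating_ex1_edge_at[OF _ d(2)] by blast
    then have "e \<in> hexE d" using perfect_matching_edge_at_unique[OF pm xS e] x by blast
    then show ?thesis using outside d(1) by blast
  next
    assume "\<exists>f\<in>edge_components S C. x \<in> f"
    then obtain f where f: "f \<in> edge_components S C" "x \<in> f" by blast
    then have "f \<in> M" using M unfolding compatible_matchings_def by blast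
    then have "f = e" using perfect_matching_edge_at_unique[OF pm xS _ e f(2) x] by blast
    then show ?thesis using f(1) by simp
  qed
qed

lemma compatible_distinct_edges_at_vertex:
  assumes clar: "clar_cover S C"
    and M1: "M1 \<in> compatible_matchings S C" and M2: "M2 \<in> compatible_matchings S C"
    and a: "a \<in> M1" "x \<in> a" and b: "b \<in> M2" "x \<in> b" and "a \<noteq> b"
  shows "\<exists>d\<in>hex_components S C. a \<in> hexE d \<and> b \<in> hexE d"
proof -
  have pm1: "perfect_matching S M1" and pm2: "perfect_matching S M2"
    using M1 M2 unfolding compatible_matchings_def by blast+
  then have "a \<in> hs_edges S" using a(1) unfolding perfect_matching_def by blast
  then have xS: "x \<in> hs_verts S" using hs_verts_if_in_hs_edge a(2) by blast
  from clar_cover_vertex_cases[OF clar xS] show ?thesis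
  proof
    assume "\<exists>d\<in>hex_components S C. x \<in> hexV d"
    then obtain d where d: "d \<in> hex_components S C" "x \<in> hexV d" by blast
    then have "alternating M1 d" "alternating M2 d"
      using M1 M2 unfolding compatible_matchings_def by blast+
    then obtain f1 f2 where "f1 \<in> hexE d" "f1 \<in> M1" "x \<in> f1" "f2 \<in> hexE d" "f2 \<in> M2" "x \<in> f2"
      using alternating_ex1_edge_at[OF _ d(2)] by blast
    then have "a \<in> hexE d" "b \<in> hexE d"
      using perfect_matching_edge_at_unique[OF pm1 xS a(1)] perfect_matching_edge_at_unique[OF pm2 xS b(1)]
        a(2) b(2) by blast+
    then show ?thesis using d(1) by blast
  next
    assume "\<exists>f\<in>edge_components S C. x \<in> f"
    then obtain f where f: "f \<in> edge_components S C" "x \<in> f" by blast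
    then have "f \<in> M1" "f \<in> M2" using M1 M2 unfolding compatible_matchings_def by blast+
    then have "f = a" "f = b"
      using perfect_matching_edge_at_unique[OF pm1 xS _ a(1) f(2) a(2)]
        perfect_matching_edge_at_unique[OF pm2 xS _ b(1) f(2) b(2)] by blast+
    with \<open>a \<noteq> b\<close> show ?thesis by simp
  qed
qed

lemma hex_components_subset_if_compatible_subset:
  assumes clar: "clar_cover S C" and clar': "clar_cover S C'"
    and sub: "compatible_matchings S C \<subseteq> compatible_matchings S C'"
  shows "hex_components S C \<subseteq> hex_components S C'"
proof
  fix c assume c: "c \<in> hex_components S C"
  let ?M1 = "clar_matching S C {c}" and ?M2 = "clar_matching S C {}"
  have M12: "?M1 \<in> compatible_matchings S C'" "?M2 \<in> compatible_matchings S C'"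
    using clar_matching_compatible[OF clar] sub by blast+
  have x: "(fst c, snd c, True) \<in> hexV c" by (cases c) (simp add: hexV_def)
  obtain a where a: "a \<in> hexE c \<inter> ?M1" "(fst c, snd c, True) \<in> a"
    using alternating_ex1_edge_at[OF alternating_clar_matching[OF c] x] by blast
  obtain b where b: "b \<in> hexE c \<inter> ?M2" "(fst c, snd c, True) \<in> b"
    using alternating_ex1_edge_at[OF alternating_clar_matching[OF c] x] by blast
  have "a \<in> hex_kekule {c} c" "b \<in> hex_kekule {} c"
    using a(1) b(1) clar_matching_Int_hexE[OF c] by blast+
  then have "a \<in> hexE_even c" "b \<in> hexE_odd c" by (simp_all add: hex_kekule_def)
  then have "a \<noteq> b" using hexE_even_Int_odd by blast
  then obtain d where "d \<in> hex_components S C'" "a \<in> hexE d" "b \<in> hexE d"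
    using compatible_distinct_edges_at_vertex[OF clar' M12] a b by blast
  moreover have "c = d"
    using cell_eq_if_common_adjacent_edges[of a b c d] a b \<open>a \<noteq> b\<close> calculation(2,3) by blast
  ultimately show "c \<in> hex_components S C'" by simp
qed

lemma agree_outside_hexagons_if_compatible_subset:
  assumes clar: "clar_cover S C" and clar': "clar_cover S C'"
    and sub: "compatible_matchings S C \<subseteq> compatible_matchings S C'"
    and outside: "\<forall>d\<in>hex_components S C'. e \<notin> hexE d"
  shows "e \<in> C \<longleftrightarrow> e \<in> C'"
proof
  have M0: "clar_matching S C {} \<in> compatible_matchings S C'"
    using clar_matching_compatible[OF clar] sub by blast
  {
    assume "e \<in> C"
    moreover have "\<forall>d\<in>hex_components S C. e \<notin> hexE d"
      using outside hex_components_subset_if_compatible_subset[OF clar clar' sub] by blast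
    ultimately have "e \<in> edge_components S C" using clar_cover_edge_cases[OF clar] by blast
    then have "e \<in> clar_matching S C {}" unfolding clar_matching_def by blast
    then have "e \<in> edge_components S C'"
      using compatible_edge_outside_hexagons[OF clar' M0 _ outside] by blast
    then show "e \<in> C'" by (rule mem_if_edge_component)
  next
    assume "e \<in> C'"
    then have "e \<in> edge_components S C'" using clar_cover_edge_cases[OF clar'] outside by blast
    then have "e \<in> clar_matching S C {}" using M0 unfolding compatible_matchings_def by blast
    then show "e \<in> C" using clar_matching_subset by blast
  }
qed

lemma edge_components_subset_if_agree:
  assumes clar: "clar_cover S C" and clar': "clar_cover S C'"
    and hex_sub: "hex_components S C \<subseteq> hex_components S C'"
    and agree: "\<forall>e\<in>hs_edges S. e \<notin> (\<Union>c\<in>hex_components S C'. hexE c) \<longrightarrow> (e \<in> C \<longleftrightarrow> e \<in> C')"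
  shows "edge_components S C' \<subseteq> edge_components S C"
proof
  fix e assume e: "e \<in> edge_components S C'"
  then have "e \<in> C'" by (rule mem_if_edge_component)
  moreover have outside: "\<forall>d\<in>hex_components S C'. e \<notin> hexE d"
    using edge_component_notin_hex_component[OF e] by blast
  ultimately have "e \<in> C" using agree clar_cover_subset[OF clar'] by blast
  then show "e \<in> edge_components S C"
    using clar_cover_edge_cases[OF clar] outside hex_sub by blast
qed

lemma hexagon_covered_by_edge_components:
  assumes clar: "clar_cover S C" and clar': "clar_cover S C'"
    and hex_sub: "hex_components S C \<subseteq> hex_components S C'"
    and agree: "\<forall>e\<in>hs_edges S. e \<notin> (\<Union>c\<in>hex_components S C'. hexE c) \<longrightarrow> (e \<in> C \<longleftrightarrow> e \<in> C')"
    and d': "d \<in> hex_components S C'" and d: "d \<notin> hex_components S C" and x: "x \<in> hexV d"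
  shows "\<exists>f\<in>edge_components S C. f \<in> hexE d \<and> x \<in> f"
proof -
  have C'x: "comp_edges C' x = hexE d" using hex_component_at[OF d' x] .
  have "x \<in> hs_verts S"
    using d' x hs_verts_if_in_hexV unfolding hex_components_def by blast
  from clar_cover_vertex_cases[OF clar this] show ?thesis
  proof
    assume "\<exists>c\<in>hex_components S C. x \<in> hexV c"
    then obtain c where c: "c \<in> hex_components S C" "x \<in> hexV c" by blast
    then have "hexE c = hexE d" using hex_component_at[of c S C' x] hex_sub C'x by blast
    then show ?thesis using c(1) d inj_hexE by (simp add: inj_eq)
  next
    assume "\<exists>f\<in>edge_components S C. x \<in> f"
    then obtain f where f: "f \<in> edge_components S C" "x \<in> f" by blast
    have "f \<in> hexE d"
    proof (cases "\<exists>d'\<in>hex_components S C'. f \<in> hexE d'")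
      case True
      then obtain d' where "d' \<in> hex_components S C'" "f \<in> hexE d'" by blast
      moreover from this have "x \<in> hexV d'" using f(2) by (auto simp: hexV_eq_Union_hexE)
      ultimately show ?thesis using hex_component_at[of d' S C' x] C'x by simp
    next
      case False
      have "f \<in> C" using f(1) by (rule mem_if_edge_component)
      then have "f \<in> C'" using agree False clar_cover_subset[OF clar] by blast
      then have "f \<in> comp_edges C' x"
        using edge_in_comp_edges hs_edges_card clar_cover_subset[OF clar'] f(2) by blast
      then show ?thesis using C'x by simp
    qed
    then show ?thesis using f by blast
  qed
qed

lemma compatible_subset_if_agree:
  assumes clar: "clar_cover S C" and clar': "clar_cover S C'"
    and hex_sub: "hex_components S C \<subseteq> hex_components S C'"
    and agree: "\<forall>e\<in>hs_edges S. e \<notin> (\<Union>c\<in>hex_components S C'. hexE c) \<longrightarrow> (e \<in> C \<longleftrightarrow> e \<in> C')"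
  shows "compatible_matchings S C \<subseteq> compatible_matchings S C'"
proof
  fix M assume "M \<in> compatible_matchings S C"
  then have pm: "perfect_matching S M"
    and alt: "\<forall>c\<in>hex_components S C. alternating M c"
    and single: "\<forall>e\<in>edge_components S C. e \<in> M"
    unfolding compatible_matchings_def by blast+
  have "alternating M d" if d': "d \<in> hex_components S C'" for d
  proof (cases "d \<in> hex_components S C")
    case True
    then show ?thesis using alt by blast
  next
    case False
    have "d \<in> S" using d' unfolding hex_components_def by blast
    moreover have "\<exists>f\<in>hexE d \<inter> M. x \<in> f" if "x \<in> hexV d" for x
      using hexagon_covered_by_edge_components[OF clar clar' hex_sub agree d' False that] single
      by blast
    ultimately show ?thesis using alternating_if_perfect_matching_covers[OF pm] by blast
  qed
  moreover have "\<forall>e\<in>edge_components S C'. e \<in> M"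
    using edge_components_subset_if_agree[OF clar clar' hex_sub agree] single by blast
  ultimately show "M \<in> compatible_matchings S C'"
    unfolding compatible_matchings_def using pm by blast
qed

theorem theorem3:
  fixes S :: "cell set" and C C' :: "hedge set"
  assumes "hexagonal_system S" and "kekulean S"
    and "clar_cover S C" and "clar_cover S C'"
  shows "subgraph (fC S C) (fC S C') \<longleftrightarrow>
    (hex_components S C \<subseteq> hex_components S C' \<and>
     (\<forall>e\<in>hs_edges S. e \<notin> (\<Union>c\<in>hex_components S C'. hexE c) \<longrightarrow> (e \<in> C \<longleftrightarrow> e \<in> C')))"
  unfolding subgraph_fC_iff
proof
  assume sub: "compatible_matchings S C \<subseteq> compatible_matchings S C'"
  show "hex_components S C \<subseteq> hex_components S C' \<and>
     (\<forall>e\<in>hs_edges S. e \<notin> (\<Union>c\<in>hex_components S C'. hexE c) \<longrightarrow> (e \<in> C \<longleftrightarrow> e \<in> C'))"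
    using hex_components_subset_if_compatible_subset[OF assms(3,4) sub]
      agree_outside_hexagons_if_compatible_subset[OF assms(3,4) sub] by blast
next
  assume "hex_components S C \<subseteq> hex_components S C' \<and>
     (\<forall>e\<in>hs_edges S. e \<notin> (\<Union>c\<in>hex_components S C'. hexE c) \<longrightarrow> (e \<in> C \<longleftrightarrow> e \<in> C'))"
  then show "compatible_matchings S C \<subseteq> compatible_matchings S C'"
    using compatible_subset_if_agree[OF assms(3,4)] by blast
qed

end
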